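(* Let $G\ge 2$ and let $r_{t,1},\dots,r_{t,G}$ be i.i.d. random variables with values in $[0,1]$, having an absolutely continuous distribution with CDF $F$, density $f$, and mean $p_t$. Let $\hat p_t=\frac1G\sum_{i}r_{t,i}$, $\hat A_{t,i}=r_{t,i}-\hat p_t$, $A_{t,i}=r_{t,i}-p_t$. Fix $\sigma\in[0,1]$ and let $S_\sigma:=\{\exists\, i\ne j:\ |r_{t,i}-r_{t,j}|>\sigma\}$, so $S_\sigma^c=\{\max_i r_{t,i}-\min_i r_{t,i}\le\sigma\}$. For $u\in[0,1]$ let $u^+:=\min\{1,u+\sigma\}$, $q(u):=F(u^+)-F(u)$, and, when $q(u)>0$, $m(u):=\mathbb E[r_{t,1}\mid u\le r_{t,1}\le u^+]=\frac{\int_u^{u^+}xf(x)\,dx}{F(u^+)-F(u)}$. Then \[ \mathbb P(S_\sigma^c)=G\int_0^1 f(u)\,q(u)^{G-1}\,du,\qquad \mathbb P(S_\sigma)=1-\mathbb P(S_\sigma^c), \] \[ \mathbb E[\hat p_t\,\mathbf 1_{S_\sigma^c}]=\int_0^1\bigl(u+(G-1)m(u)\bigr)f(u)\,q(u)^{G-1}\,du, \] and, if $\mathbb P(S_\sigma)>0$, \[ \mathbb E[\hat p_t\mid S_\sigma]=\frac{p_t-\mathbb E[\hat p_t\,\mathbf 1_{S_\sigma^c}]}{\mathbb P(S_\sigma)},\qquad \mathbb E[\hat A_{t,i}-A_{t,i}\mid S_\sigma]=p_t-\mathbb E[\hat p_t\mid S_\sigma]\ \text{ for all } i. \]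
   Context: Non-binary reward extension of the group-relative setting: $G$ rewards in $[0,1]$ for one prompt, group baseline $\hat p_t$, group-relative advantage $\hat A_{t,i}$, expected advantage $A_{t,i}$; $S_\sigma$ is the "update" event that some two rewards in the group differ by more than $\sigma$. In the integrand, $m(u)$ is only needed where $q(u)>0$ (the integrand vanishes otherwise). *)

theory Defs
  imports "HOL-Probability.Probability"
begin

definition cond_exp_event :: "'a measure \<Rightarrow> ('a \<Rightarrow> real) \<Rightarrow> 'a set \<Rightarrow> real" where
  "cond_exp_event M X S = (\<integral>\<omega>. X \<omega> * indicator S \<omega> \<partial>M) / measure M S"

end

theory Submission
  imports Defs
begin

text \<open>Call \<open>k\<close> a pivot of a sample if \<open>r\<^sub>k\<close> is its minimum (ties broken towards the
  smallest index) and every other value lies in \<open>[r\<^sub>k, r\<^sub>k + \<sigma>]\<close>. The complement of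
  \<open>S\<^sub>\<sigma>\<close> is exactly the event that a pivot exists, and the pivot is then unique, so the
  indicator of the complement is the sum over \<open>k\<close> of the indicators that \<open>k\<close> is a pivot.
  Conditionally on the pivot value \<open>u\<close>, the other \<open>G - 1\<close> values are independent and each
  falls into its window with probability \<open>q(u)\<close>, atoms being negligible. Integrating over \<open>u\<close>
  gives the probability of the complement; weighting by the pivot value \<open>u\<close>, or by a
  non-pivot value (conditional mean \<open>m(u)\<close>), gives the expectation of the sample mean on it.\<close>

lemma nn_integral_PiM_pivot:
  fixes D :: "'b measure" and g :: "'b \<Rightarrow> ennreal" and \<psi> :: "'i \<Rightarrow> 'b \<Rightarrow> 'b \<Rightarrow> ennreal"
  assumes "sigma_finite_measure D" and I: "finite I" "k \<in> I"
    and g[measurable]: "g \<in> borel_measurable D"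
    and \<psi>[measurable]: "\<And>j. (\<lambda>(u, y). \<psi> j u y) \<in> borel_measurable (D \<Otimes>\<^sub>M D)"
  shows "(\<integral>\<^sup>+x. g (x k) * (\<Prod>j\<in>I - {k}. \<psi> j (x k) (x j)) \<partial>PiM I (\<lambda>_. D))
       = (\<integral>\<^sup>+u. g u * (\<Prod>j\<in>I - {k}. \<integral>\<^sup>+y. \<psi> j u y \<partial>D) \<partial>D)"
proof -
  interpret product_sigma_finite "\<lambda>_. D"
    using assms(1) by (simp add: product_sigma_finite_def)
  have \<psi>_PiM[measurable]: "(\<lambda>x. \<psi> j (x a) (x b)) \<in> borel_measurable (PiM J (\<lambda>_. D))"
    if "a \<in> J" "b \<in> J" for j a b and J :: "'i set"
    using measurable_Pair_compose_split[OF \<psi>, of "\<lambda>x. x a" _ "\<lambda>x. x b"] that by simp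
  have I_split: "I = insert k (I - {k})" using I by auto
  have "(\<integral>\<^sup>+x. g (x k) * (\<Prod>j\<in>I - {k}. \<psi> j (x k) (x j)) \<partial>PiM I (\<lambda>_. D))
     = (\<integral>\<^sup>+u. g u * (\<integral>\<^sup>+x. (\<Prod>j\<in>I - {k}. \<psi> j u (x j)) \<partial>PiM (I - {k}) (\<lambda>_. D)) \<partial>D)"
    using I by (subst I_split, subst product_nn_integral_insert_rev)
      (auto intro!: nn_integral_cong prod.cong simp: nn_integral_cmult simp flip: I_split)
  also have "\<dots> = (\<integral>\<^sup>+u. g u * (\<Prod>j\<in>I - {k}. \<integral>\<^sup>+y. \<psi> j u y \<partial>D) \<partial>D)"
  proof (intro nn_integral_cong)
    fix u assume "u \<in> space D"
    then have "\<psi> j u \<in> borel_measurable D" for j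
      using measurable_Pair2[OF \<psi>] by simp
    then show "g u * (\<integral>\<^sup>+x. (\<Prod>j\<in>I - {k}. \<psi> j u (x j)) \<partial>PiM (I - {k}) (\<lambda>_. D))
        = g u * (\<Prod>j\<in>I - {k}. \<integral>\<^sup>+y. \<psi> j u y \<partial>D)"
      using I by (simp add: product_nn_integral_prod[of "I - {k}" "\<lambda>j. \<psi> j u"])
  qed
  finally show ?thesis .
qed

definition spread_le :: "real \<Rightarrow> nat \<Rightarrow> (nat \<Rightarrow> real) \<Rightarrow> bool" where
  "spread_le \<sigma> G x \<longleftrightarrow> (\<forall>i<G. \<forall>j<G. \<bar>x i - x j\<bar> \<le> \<sigma>)"

lemma spread_le_iff_no_distant_pair:
  assumes "0 \<le> \<sigma>"
  shows "spread_le \<sigma> G x \<longleftrightarrow> \<not> (\<exists>i<G. \<exists>j<G. i \<noteq> j \<and> \<bar>x i - x j\<bar> > \<sigma>)"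
  using assms unfolding spread_le_def by (metis abs_0 diff_self not_less)

lemma pred_spread_le[measurable]: "Measurable.pred (PiM {..<G} (\<lambda>_. borel)) (spread_le \<sigma> G)"
  unfolding spread_le_def by measurable

text \<open>The half-open windows for \<open>j < k\<close> make the pivot the first index at which the minimum
  is attained, so that a sample of spread at most \<open>\<sigma>\<close> has exactly one pivot.\<close>

definition pivot_window :: "real \<Rightarrow> nat \<Rightarrow> nat \<Rightarrow> real \<Rightarrow> real set" where
  "pivot_window \<sigma> k j u = (if j < k then {u<..u + \<sigma>} else {u..u + \<sigma>})"

definition is_pivot :: "real \<Rightarrow> nat \<Rightarrow> (nat \<Rightarrow> real) \<Rightarrow> nat \<Rightarrow> bool" where
  "is_pivot \<sigma> G x k \<longleftrightarrow> k < G \<and> (\<forall>j<G. j \<noteq> k \<longrightarrow> x j \<in> pivot_window \<sigma> k j (x k))"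

lemma is_pivot_spread_le:
  assumes "0 \<le> \<sigma>" and "is_pivot \<sigma> G x k"
  shows "spread_le \<sigma> G x"
proof -
  have bounds: "x k \<le> x j \<and> x j \<le> x k + \<sigma>" if "j < G" for j
  proof (cases "j = k")
    case False
    then have "x j \<in> pivot_window \<sigma> k j (x k)"
      using assms(2) that by (simp add: is_pivot_def)
    then show ?thesis
      by (auto simp: pivot_window_def split: if_splits)
  qed (use assms(1) in simp)
  show ?thesis
    unfolding spread_le_def
  proof (intro allI impI)
    fix i j assume "i < G" "j < G"
    with bounds[of i] bounds[of j] show "\<bar>x i - x j\<bar> \<le> \<sigma>"
      by linarith
  qed
qed

lemma is_pivot_unique:
  assumes "is_pivot \<sigma> G x k" and "is_pivot \<sigma> G x k'"
  shows "k = k'"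
proof -
  have False if "is_pivot \<sigma> G x k" "is_pivot \<sigma> G x k'" "k < k'" for k k'
  proof -
    have "x k \<in> pivot_window \<sigma> k' k (x k')" and "x k' \<in> pivot_window \<sigma> k k' (x k)"
      using that by (auto simp: is_pivot_def)
    then show False
      using \<open>k < k'\<close> by (simp add: pivot_window_def)
  qed
  then show ?thesis
    using assms by (metis linorder_neqE_nat)
qed

lemma spread_le_imp_ex_pivot:
  assumes "0 < G" and "spread_le \<sigma> G x"
  shows "\<exists>k. is_pivot \<sigma> G x k"
proof -
  define K where "K = {k. k < G \<and> (\<forall>j<G. x k \<le> x j)}"
  have "Min (x ` {..<G}) \<in> x ` {..<G}"
    using assms(1) by (intro Min_in) auto
  then obtain i where i: "i < G" "x i = Min (x ` {..<G})"
    by auto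
  then have "i \<in> K"
    unfolding K_def by (auto intro: Min_le)
  define k where "k = (LEAST k. k \<in> K)"
  have k: "k \<in> K"
    unfolding k_def using \<open>i \<in> K\<close> by (rule LeastI)
  have below: "x k < x j" if "j < k" for j
  proof -
    have "j \<notin> K"
      using not_less_Least[of j "\<lambda>k. k \<in> K"] that unfolding k_def by blast
    moreover have "j < G"
      using k that unfolding K_def by simp
    ultimately obtain l where "l < G" "x l < x j"
      unfolding K_def by (auto simp: not_le)
    moreover have "x k \<le> x l"
      using k \<open>l < G\<close> unfolding K_def by blast
    ultimately show ?thesis by linarith
  qed
  have "x j \<in> pivot_window \<sigma> k j (x k)" if "j < G" for j
  proof -
    have "x k \<le> x j" and "\<bar>x j - x k\<bar> \<le> \<sigma>"
      using k that assms(2) unfolding K_def spread_le_def by blast+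
    then show ?thesis
      using below[of j] by (auto simp: pivot_window_def)
  qed
  then have "is_pivot \<sigma> G x k"
    using k unfolding is_pivot_def K_def by blast
  then show ?thesis ..
qed

lemma card_pivots:
  assumes "0 < G" and "0 \<le> \<sigma>"
  shows "card {k. is_pivot \<sigma> G x k} = (if spread_le \<sigma> G x then 1 else 0)"
proof (cases "spread_le \<sigma> G x")
  case True
  then obtain k where "is_pivot \<sigma> G x k"
    using spread_le_imp_ex_pivot assms(1) by blast
  then have "{k. is_pivot \<sigma> G x k} = {k}"
    using is_pivot_unique by blast
  then show ?thesis using True by simp
next
  case False
  then have "{k. is_pivot \<sigma> G x k} = {}"
    using is_pivot_spread_le[OF assms(2)] by blast
  then show ?thesis using False by simp
qed

definition pivot_indicator :: "real \<Rightarrow> nat \<Rightarrow> nat \<Rightarrow> (nat \<Rightarrow> real) \<Rightarrow> ennreal" where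
  "pivot_indicator \<sigma> G k x = (\<Prod>j\<in>{..<G} - {k}. indicator (pivot_window \<sigma> k j (x k)) (x j))"

lemma pivot_indicator_eq:
  assumes "k < G"
  shows "pivot_indicator \<sigma> G k x = (if is_pivot \<sigma> G x k then 1 else 0)"
proof (cases "is_pivot \<sigma> G x k")
  case True
  then show ?thesis
    unfolding pivot_indicator_def by (intro trans[OF prod.neutral]) (auto simp: is_pivot_def)
next
  case False
  then obtain j where "j \<in> {..<G} - {k}" "x j \<notin> pivot_window \<sigma> k j (x k)"
    using assms by (auto simp: is_pivot_def)
  then show ?thesis
    using False unfolding pivot_indicator_def by (intro trans[OF prod_zero] bexI) auto
qed

lemma sum_pivot_indicator:
  assumes "0 < G" and "0 \<le> \<sigma>"
  shows "(\<Sum>k<G. pivot_indicator \<sigma> G k x) = indicator {x. spread_le \<sigma> G x} x"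
proof -
  have "(\<Sum>k<G. pivot_indicator \<sigma> G k x) = (\<Sum>k<G. if is_pivot \<sigma> G x k then 1 else 0)"
    by (simp add: pivot_indicator_eq)
  also have "\<dots> = of_nat (card {k. is_pivot \<sigma> G x k})"
  proof -
    have "{k. is_pivot \<sigma> G x k} = {..<G} \<inter> {k. is_pivot \<sigma> G x k}"
      by (auto simp: is_pivot_def)
    then show ?thesis
      by (simp add: sum.If_cases)
  qed
  finally show ?thesis
    using card_pivots[OF assms] by (simp add: indicator_def)
qed

locale sample_law = real_distribution D for D :: "real measure" +
  fixes \<sigma> :: real
  assumes width_nonneg: "0 \<le> \<sigma>"
    and AE_unit_interval: "AE x in D. x \<in> {0..1}"
    and AE_neq: "\<And>u. AE x in D. x \<noteq> u"
begin

abbreviation sample :: "nat \<Rightarrow> (nat \<Rightarrow> real) measure" where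
  "sample G \<equiv> PiM {..<G} (\<lambda>_. D)"

text \<open>With \<open>u\<^sup>+ = min 1 (u + \<sigma>)\<close>, these are \<open>q(u)\<close> and \<open>q(u) m(u)\<close> of the paper.\<close>

definition window_mass :: "real \<Rightarrow> real" where
  "window_mass u = measure D {u..min 1 (u + \<sigma>)}"

definition window_moment :: "real \<Rightarrow> real" where
  "window_moment u = (\<integral>y. indicator {u..min 1 (u + \<sigma>)} y * y \<partial>D)"

lemma window_mass_nonneg: "0 \<le> window_mass u"
  by (simp add: window_mass_def)

lemma borel_measurable_window_mass[measurable]: "window_mass \<in> borel_measurable borel"
proof -
  have "window_mass u = (\<integral>y. indicator {u..min 1 (u + \<sigma>)} y \<partial>D)" for u
    by (simp add: window_mass_def)
  then have "window_mass = (\<lambda>u. \<integral>y. (if u \<le> y \<and> y \<le> min 1 (u + \<sigma>) then 1 else 0) \<partial>D)"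
    by (auto simp: indicator_def intro!: ext Bochner_Integration.integral_cong)
  then show ?thesis by simp
qed

lemma borel_measurable_window_moment[measurable]: "window_moment \<in> borel_measurable borel"
proof -
  have "window_moment = (\<lambda>u. \<integral>y. (if u \<le> y \<and> y \<le> min 1 (u + \<sigma>) then y else 0) \<partial>D)"
    by (auto simp: window_moment_def indicator_def intro!: ext Bochner_Integration.integral_cong)
  then show ?thesis by simp
qed

lemma AE_pivot_window_iff: "AE y in D. y \<in> pivot_window \<sigma> k j u \<longleftrightarrow> y \<in> {u..min 1 (u + \<sigma>)}"
  using AE_unit_interval AE_neq[of u] by eventually_elim (auto simp: pivot_window_def)

lemma nn_integral_indicator_pivot_window:
  "(\<integral>\<^sup>+y. indicator (pivot_window \<sigma> k j u) y \<partial>D) = ennreal (window_mass u)"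
proof -
  have "emeasure D (pivot_window \<sigma> k j u) = emeasure D {u..min 1 (u + \<sigma>)}"
    by (rule emeasure_eq_AE[OF AE_pivot_window_iff]) (auto simp: pivot_window_def)
  then show ?thesis
    by (simp add: window_mass_def emeasure_eq_measure pivot_window_def)
qed

lemma integrable_window: "integrable D (\<lambda>y. indicator {u..min 1 (u + \<sigma>)} y * y)"
  by (rule integrable_const_bound[where B = 1]) (use AE_unit_interval in \<open>auto simp: indicator_def elim!: AE_mp\<close>)

lemma nn_integral_pivot_window:
  "(\<integral>\<^sup>+y. ennreal y * indicator (pivot_window \<sigma> k j u) y \<partial>D) = ennreal (window_moment u)"
proof -
  have "AE y in D. ennreal y * indicator (pivot_window \<sigma> k j u) y
      = ennreal (indicator {u..min 1 (u + \<sigma>)} y * y)"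
    using AE_pivot_window_iff[of k j u] AE_unit_interval
    by eventually_elim (auto simp: indicator_def)
  then have "(\<integral>\<^sup>+y. ennreal y * indicator (pivot_window \<sigma> k j u) y \<partial>D)
      = (\<integral>\<^sup>+y. ennreal (indicator {u..min 1 (u + \<sigma>)} y * y) \<partial>D)"
    by (rule nn_integral_cong_AE)
  also have "\<dots> = ennreal (window_moment u)"
    unfolding window_moment_def using AE_unit_interval
    by (intro nn_integral_eq_integral integrable_window) (auto simp: indicator_def)
  finally show ?thesis .
qed

lemma window_moment_nonneg: "0 \<le> window_moment u"
  unfolding window_moment_def using AE_unit_interval
  by (intro integral_nonneg_AE) (auto simp: indicator_def elim!: AE_mp)

lemma window_moment_le_mass: "window_moment u \<le> window_mass u"
proof -
  have "window_moment u \<le> (\<integral>y. indicator {u..min 1 (u + \<sigma>)} y \<partial>D)"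
    unfolding window_moment_def using AE_unit_interval
    by (intro integral_mono_AE integrable_window integrable_real_indicator)
      (auto simp: indicator_def emeasure_eq_measure elim!: AE_mp)
  then show ?thesis
    by (simp add: window_mass_def)
qed

lemma window_moment_mult_power:
  "window_moment u * window_mass u ^ n = window_moment u / window_mass u * window_mass u ^ Suc n"
  using window_moment_nonneg[of u] window_moment_le_mass[of u]
  by (cases "window_mass u = 0") auto

lemma cdf_diff_eq_window_mass:
  assumes "u \<le> 1"
  shows "cdf D (min 1 (u + \<sigma>)) - cdf D u = window_mass u"
proof -
  have "measure D {u<..min 1 (u + \<sigma>)} = window_mass u"
    unfolding window_mass_def using AE_neq[of u]
    by (intro measure_eq_AE) (auto elim!: AE_mp)
  then show ?thesis
    using cdf_diff_eq[of u "min 1 (u + \<sigma>)"] assms width_nonneg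
    by (cases "u < min 1 (u + \<sigma>)") auto
qed

lemma measurable_pivot_window_indicator[measurable]:
  "(\<lambda>(u, y). indicator (pivot_window \<sigma> k j u) y :: ennreal) \<in> borel_measurable (D \<Otimes>\<^sub>M D)"
proof -
  have "(\<lambda>(u, y). indicator (pivot_window \<sigma> k j u) y :: ennreal)
      = (\<lambda>(u, y). if (if j < k then u < y else u \<le> y) \<and> y \<le> u + \<sigma> then 1 else 0)"
    by (auto simp: indicator_def pivot_window_def)
  then show ?thesis by simp
qed

lemma measurable_pivot_indicator[measurable]:
  assumes "k < G"
  shows "pivot_indicator \<sigma> G k \<in> borel_measurable (sample G)"
  unfolding pivot_indicator_def
proof (rule borel_measurable_prod_ennreal)
  fix j assume "j \<in> {..<G} - {k}"
  then show "(\<lambda>x. indicator (pivot_window \<sigma> k j (x k)) (x j) :: ennreal) \<in> borel_measurable (sample G)"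
    using measurable_Pair_compose_split[OF measurable_pivot_window_indicator, of "\<lambda>x. x k" _ "\<lambda>x. x j"]
      assms by simp
qed

lemma nn_integral_pivot_indicator:
  assumes "k < G" and "g \<in> borel_measurable borel"
  shows "(\<integral>\<^sup>+x. g (x k) * pivot_indicator \<sigma> G k x \<partial>sample G)
    = (\<integral>\<^sup>+u. g u * ennreal (window_mass u) ^ (G - 1) \<partial>D)"
proof -
  have "(\<integral>\<^sup>+x. g (x k) * pivot_indicator \<sigma> G k x \<partial>sample G)
      = (\<integral>\<^sup>+u. g u * (\<Prod>j\<in>{..<G} - {k}. \<integral>\<^sup>+y. indicator (pivot_window \<sigma> k j u) y \<partial>D) \<partial>D)"
    unfolding pivot_indicator_def using assms
    by (intro nn_integral_PiM_pivot sigma_finite_measure_axioms) auto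
  also have "\<dots> = (\<integral>\<^sup>+u. g u * ennreal (window_mass u) ^ (G - 1) \<partial>D)"
    using assms(1) by (simp add: nn_integral_indicator_pivot_window)
  finally show ?thesis .
qed

lemma nn_integral_pivot_indicator_other:
  assumes "k < G" and "j < G" and "j \<noteq> k"
  shows "(\<integral>\<^sup>+x. ennreal (x j) * pivot_indicator \<sigma> G k x \<partial>sample G)
    = (\<integral>\<^sup>+u. ennreal (window_moment u) * ennreal (window_mass u) ^ (G - 2) \<partial>D)"
proof -
  define \<psi> where "\<psi> i u y = (if i = j then ennreal y else 1) * indicator (pivot_window \<sigma> k i u) y"
    for i u y
  have "ennreal (x j) * pivot_indicator \<sigma> G k x = 1 * (\<Prod>i\<in>{..<G} - {k}. \<psi> i (x k) (x i))" for x
    using assms unfolding \<psi>_def pivot_indicator_def prod.distrib by (simp add: prod.delta)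
  then have "(\<integral>\<^sup>+x. ennreal (x j) * pivot_indicator \<sigma> G k x \<partial>sample G)
      = (\<integral>\<^sup>+u. 1 * (\<Prod>i\<in>{..<G} - {k}. \<integral>\<^sup>+y. \<psi> i u y \<partial>D) \<partial>D)"
    using assms(1) unfolding \<psi>_def
    by (simp only:) (intro nn_integral_PiM_pivot sigma_finite_measure_axioms; simp)
  also have "\<dots> = (\<integral>\<^sup>+u. ennreal (window_moment u) * ennreal (window_mass u) ^ (G - 2) \<partial>D)"
  proof (intro nn_integral_cong)
    fix u
    have "(\<Prod>i\<in>{..<G} - {k}. \<integral>\<^sup>+y. \<psi> i u y \<partial>D)
        = (\<integral>\<^sup>+y. \<psi> j u y \<partial>D) * (\<Prod>i\<in>{..<G} - {k} - {j}. \<integral>\<^sup>+y. \<psi> i u y \<partial>D)"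
      using assms by (subst prod.remove[of _ j]) auto
    also have "\<dots> = ennreal (window_moment u) * ennreal (window_mass u) ^ (G - 2)"
      using assms by (simp add: \<psi>_def nn_integral_pivot_window nn_integral_indicator_pivot_window
          card_Diff_singleton_if numeral_2_eq_2)
    finally show "1 * (\<Prod>i\<in>{..<G} - {k}. \<integral>\<^sup>+y. \<psi> i u y \<partial>D)
        = ennreal (window_moment u) * ennreal (window_mass u) ^ (G - 2)"
      by simp
  qed
  finally show ?thesis .
qed

lemma emeasure_sample_spread_le:
  assumes "0 < G"
  shows "emeasure (sample G) {x \<in> space (sample G). spread_le \<sigma> G x}
    = of_nat G * (\<integral>\<^sup>+u. ennreal (window_mass u) ^ (G - 1) \<partial>D)"
proof -
  have "{x \<in> space (sample G). spread_le \<sigma> G x} \<in> sets (sample G)"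
    by measurable
  then have "emeasure (sample G) {x \<in> space (sample G). spread_le \<sigma> G x}
      = (\<integral>\<^sup>+x. indicator {x \<in> space (sample G). spread_le \<sigma> G x} x \<partial>sample G)"
    by simp
  also have "\<dots> = (\<integral>\<^sup>+x. (\<Sum>k<G. 1 * pivot_indicator \<sigma> G k x) \<partial>sample G)"
    by (intro nn_integral_cong)
      (simp add: sum_pivot_indicator[OF assms width_nonneg] indicator_def)
  also have "\<dots> = (\<Sum>k<G. \<integral>\<^sup>+x. 1 * pivot_indicator \<sigma> G k x \<partial>sample G)"
    by (intro nn_integral_sum) auto
  also have "\<dots> = of_nat G * (\<integral>\<^sup>+u. ennreal (window_mass u) ^ (G - 1) \<partial>D)"
    using nn_integral_pivot_indicator[of _ G "\<lambda>_. 1"] by simp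
  finally show ?thesis .
qed

lemma nn_integral_sample_sum_spread_le:
  assumes "0 < G"
  shows "(\<integral>\<^sup>+x. (\<Sum>i<G. ennreal (x i)) * indicator {x. spread_le \<sigma> G x} x \<partial>sample G)
    = of_nat G * (\<integral>\<^sup>+u. ennreal u * ennreal (window_mass u) ^ (G - 1)
        + of_nat (G - 1) * (ennreal (window_moment u) * ennreal (window_mass u) ^ (G - 2)) \<partial>D)"
    (is "_ = of_nat G * (\<integral>\<^sup>+u. ?own u + of_nat (G - 1) * ?other u \<partial>D)")
proof -
  have pivot_sum: "(\<Sum>i<G. \<integral>\<^sup>+x. ennreal (x i) * pivot_indicator \<sigma> G k x \<partial>sample G)
      = (\<integral>\<^sup>+u. ?own u \<partial>D) + of_nat (G - 1) * (\<integral>\<^sup>+u. ?other u \<partial>D)" if "k < G" for k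
  proof -
    have "(\<Sum>i<G. \<integral>\<^sup>+x. ennreal (x i) * pivot_indicator \<sigma> G k x \<partial>sample G)
        = (\<integral>\<^sup>+x. ennreal (x k) * pivot_indicator \<sigma> G k x \<partial>sample G)
          + (\<Sum>i\<in>{..<G} - {k}. \<integral>\<^sup>+x. ennreal (x i) * pivot_indicator \<sigma> G k x \<partial>sample G)"
      using that by (subst sum.remove[of _ k]) auto
    then show ?thesis
      using that by (simp add: nn_integral_pivot_indicator nn_integral_pivot_indicator_other)
  qed
  have "(\<integral>\<^sup>+x. (\<Sum>i<G. ennreal (x i)) * indicator {x. spread_le \<sigma> G x} x \<partial>sample G)
      = (\<integral>\<^sup>+x. (\<Sum>k<G. \<Sum>i<G. ennreal (x i) * pivot_indicator \<sigma> G k x) \<partial>sample G)"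
    unfolding sum_pivot_indicator[OF assms width_nonneg, symmetric] sum_product by (subst sum.swap) (rule refl)
  also have "\<dots> = (\<Sum>k<G. \<Sum>i<G. \<integral>\<^sup>+x. ennreal (x i) * pivot_indicator \<sigma> G k x \<partial>sample G)"
  proof -
    have [measurable]: "(\<lambda>x. ennreal (x i) * pivot_indicator \<sigma> G k x) \<in> borel_measurable (sample G)"
      if "i < G" "k < G" for i k
      using that measurable_compose[OF measurable_component_singleton[of i "{..<G}" "\<lambda>_. D"], of ennreal]
      by (intro borel_measurable_times_ennreal measurable_pivot_indicator) auto
    show ?thesis
      by (subst nn_integral_sum) (auto intro!: sum.cong nn_integral_sum borel_measurable_sum)
  qed
  also have "\<dots> = of_nat G * ((\<integral>\<^sup>+u. ?own u \<partial>D) + of_nat (G - 1) * (\<integral>\<^sup>+u. ?other u \<partial>D))"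
    by (simp add: pivot_sum)
  also have "\<dots> = of_nat G * (\<integral>\<^sup>+u. ?own u + of_nat (G - 1) * ?other u \<partial>D)"
    by (simp add: nn_integral_add nn_integral_cmult)
  finally show ?thesis .
qed

lemma AE_sample_nonneg: "AE x in sample G. \<forall>i<G. 0 \<le> x i"
proof -
  have "AE x in sample G. \<forall>i\<in>{..<G}. 0 \<le> x i"
    using AE_unit_interval
    by (intro eventually_ball_finite ballI AE_PiM_component prob_space_axioms) (auto elim!: AE_mp)
  then show ?thesis by (simp add: Ball_def)
qed

lemma measure_sample_spread_le:
  assumes "0 < G"
  shows "measure (sample G) {x \<in> space (sample G). spread_le \<sigma> G x}
    = G * (\<integral>u. window_mass u ^ (G - 1) \<partial>D)"
proof -
  have "(\<integral>u. window_mass u ^ (G - 1) \<partial>D) = enn2real (\<integral>\<^sup>+u. ennreal (window_mass u) ^ (G - 1) \<partial>D)"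
    by (rule enn2real_nn_integral_eq_integral[symmetric]) (auto simp: ennreal_power window_mass_nonneg)
  then show ?thesis
    unfolding measure_def emeasure_sample_spread_le[OF assms] by (simp add: enn2real_mult)
qed

lemma integral_sample_sum_spread_le:
  assumes "0 < G"
  shows "(\<integral>x. (\<Sum>i<G. x i) * indicator {x. spread_le \<sigma> G x} x \<partial>sample G)
    = G * (\<integral>u. u * window_mass u ^ (G - 1)
        + real (G - 1) * (window_moment u * window_mass u ^ (G - 2)) \<partial>D)"
proof -
  have "(\<integral>x. (\<Sum>i<G. x i) * indicator {x. spread_le \<sigma> G x} x \<partial>sample G)
      = enn2real (\<integral>\<^sup>+x. (\<Sum>i<G. ennreal (x i)) * indicator {x. spread_le \<sigma> G x} x \<partial>sample G)"
  proof (rule enn2real_nn_integral_eq_integral[symmetric])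
    show "AE x in sample G. (\<Sum>i<G. ennreal (x i)) * indicator {x. spread_le \<sigma> G x} x
        = ennreal ((\<Sum>i<G. x i) * indicator {x. spread_le \<sigma> G x} x)"
      using AE_sample_nonneg
      by eventually_elim (subst sum_ennreal; simp add: ennreal_mult'' ennreal_indicator sum_nonneg)
    show "AE x in sample G. 0 \<le> (\<Sum>i<G. x i) * indicator {x. spread_le \<sigma> G x} x"
      using AE_sample_nonneg by eventually_elim (auto intro!: mult_nonneg_nonneg sum_nonneg)
    have "(\<lambda>x. x i) \<in> borel_measurable (sample G)" if "i < G" for i
      using that measurable_component_singleton[of i "{..<G}" "\<lambda>_. D"] by simp
    then show "(\<lambda>x. (\<Sum>i<G. x i) * indicator {x. spread_le \<sigma> G x} x) \<in> borel_measurable (sample G)"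
      by (intro borel_measurable_times borel_measurable_sum borel_measurable_indicator') auto
  qed
  also have "\<dots> = G * (\<integral>u. u * window_mass u ^ (G - 1)
        + real (G - 1) * (window_moment u * window_mass u ^ (G - 2)) \<partial>D)"
  proof -
    have "AE u in D. ennreal u * ennreal (window_mass u) ^ (G - 1)
          + of_nat (G - 1) * (ennreal (window_moment u) * ennreal (window_mass u) ^ (G - 2))
        = ennreal (u * window_mass u ^ (G - 1) + real (G - 1) * (window_moment u * window_mass u ^ (G - 2)))"
      using AE_unit_interval
      by eventually_elim
        (simp add: window_moment_nonneg ennreal_power ennreal_mult'' ennreal_plus
          ennreal_of_nat_eq_real_of_nat window_mass_nonneg)
    moreover have "AE u in D. 0 \<le> u * window_mass u ^ (G - 1)
        + real (G - 1) * (window_moment u * window_mass u ^ (G - 2))"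
      using AE_unit_interval by eventually_elim (simp add: window_mass_nonneg window_moment_nonneg)
    ultimately show ?thesis
      unfolding nn_integral_sample_sum_spread_le[OF assms]
      by (simp add: enn2real_mult enn2real_nn_integral_eq_integral)
  qed
  finally show ?thesis .
qed

end

locale density_sample_law = sample_law "density lborel f" \<sigma> for f :: "real \<Rightarrow> real" and \<sigma> +
  assumes density_measurable[measurable]: "f \<in> borel_measurable borel"
    and density_nonneg: "\<And>x. 0 \<le> f x"
begin

lemma integral_eq_set_integral:
  assumes [measurable]: "g \<in> borel_measurable borel"
  shows "(\<integral>u. g u \<partial>density lborel f) = (LBINT u:{0..1}. f u * g u)"
proof -
  have "AE u in lborel. 0 < f u \<longrightarrow> u \<in> {0..1}"
    using AE_unit_interval by (subst (asm) AE_density) auto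
  then have "AE u in lborel. f u * g u = indicator {0..1} u * (f u * g u)"
    by eventually_elim (use density_nonneg in \<open>auto simp: indicator_def order.order_iff_strict\<close>)
  then have "(\<integral>u. f u * g u \<partial>lborel) = (\<integral>u. indicator {0..1} u * (f u * g u) \<partial>lborel)"
    by (rule integral_cong_AE[rotated 2]) simp_all
  then show ?thesis
    unfolding set_lebesgue_integral_def using density_nonneg by (simp add: integral_density)
qed

lemma window_moment_eq_set_integral: "window_moment u = (LBINT x:{u..min 1 (u + \<sigma>)}. x * f x)"
  unfolding window_moment_def set_lebesgue_integral_def using density_nonneg
  by (simp add: integral_density mult_ac)

end

lemma distr_borel_eq_density:
  assumes "distributed M lborel X (\<lambda>x. ennreal (f x))"
  shows "distr M borel X = density lborel f"
  using distributed_distr_eq_density[OF assms] by (simp cong: distr_cong)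

lemma (in prob_space) density_sample_law_of_distributed:
  assumes X: "distributed M lborel X (\<lambda>x. ennreal (f x))" and "\<And>x. 0 \<le> f x"
    and "\<And>\<omega>. \<omega> \<in> space M \<Longrightarrow> X \<omega> \<in> {0..1}" and "0 \<le> \<sigma>"
  shows "density_sample_law f \<sigma>"
proof -
  have [measurable]: "f \<in> borel_measurable borel" "X \<in> borel_measurable M"
    using distributed_real_measurable[OF _ X] distributed_measurable[OF X] assms(2) by auto
  have law: "distr M borel X = density lborel f"
    using distr_borel_eq_density[OF X] .
  have "prob_space (density lborel f)"
    unfolding law[symmetric] by (rule prob_space_distr) simp
  moreover have "AE x in density lborel f. x \<in> {0..1}"
    unfolding law[symmetric] using assms(3) by (subst AE_distr_iff) auto
  moreover have "AE x in density lborel f. x \<noteq> u" for u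
    using AE_lborel_singleton[of u] by (subst AE_density) (auto elim!: eventually_mono)
  ultimately show ?thesis
    using assms(2,4)
    by (intro density_sample_law.intro sample_law.intro real_distribution.intro
        real_distribution_axioms.intro sample_law_axioms.intro density_sample_law_axioms.intro) simp_all
qed

locale iid_density_sample = density_sample_law f \<sigma> + M: prob_space M
  for f \<sigma> and M :: "'a measure" +
  fixes G :: nat and r :: "nat \<Rightarrow> 'a \<Rightarrow> real"
  assumes sample_size_pos: "0 < G"
    and indep: "M.indep_vars (\<lambda>_. borel) r {..<G}"
    and random_variable: "\<And>i. i < G \<Longrightarrow> r i \<in> borel_measurable M"
    and law: "\<And>i. i < G \<Longrightarrow> distr M borel (r i) = density lborel f"
begin

lemma measurable_restrict_sample: "(\<lambda>\<omega>. \<lambda>i\<in>{..<G}. r i \<omega>) \<in> M \<rightarrow>\<^sub>M PiM {..<G} (\<lambda>_. borel)"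
  by (intro measurable_restrict) (simp add: random_variable)

lemma distr_restrict_sample: "distr M (PiM {..<G} (\<lambda>_. borel)) (\<lambda>\<omega>. \<lambda>i\<in>{..<G}. r i \<omega>) = sample G"
proof -
  have "distr M (PiM {..<G} (\<lambda>_. borel)) (\<lambda>\<omega>. \<lambda>i\<in>{..<G}. r i \<omega>) = PiM {..<G} (\<lambda>i. distr M borel (r i))"
    using M.indep_vars_iff_distr_eq_PiM'[of "{..<G}" r "\<lambda>_. borel"] indep random_variable sample_size_pos
    by auto
  also have "\<dots> = sample G"
    by (intro PiM_cong) (simp_all add: law)
  finally show ?thesis .
qed

lemma integrable_sample_value:
  assumes "i < G"
  shows "integrable M (r i)"
proof -
  have "AE x in distr M borel (r i). x \<in> {0..1}"
    unfolding law[OF assms] by (rule AE_unit_interval)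
  then have "AE \<omega> in M. r i \<omega> \<in> {0..1}"
    by (subst (asm) AE_distr_iff) (simp_all add: random_variable assms)
  then show ?thesis
    by (intro M.integrable_const_bound[where B = 1]) (auto simp: random_variable assms elim!: AE_mp)
qed

lemma expectation_sample_value: "i < G \<Longrightarrow> M.expectation (r i) = (\<integral>x. x \<partial>density lborel f)"
  using integral_distr[OF random_variable, of i "\<lambda>x. x"] by (simp add: law)

lemma integrable_mean: "integrable M (\<lambda>\<omega>. (\<Sum>i<G. r i \<omega>) / G)"
  using integrable_sample_value by (intro integrable_divide_zero integrable_sum) auto

lemma expectation_mean: "M.expectation (\<lambda>\<omega>. (\<Sum>i<G. r i \<omega>) / G) = (\<integral>x. x \<partial>density lborel f)"
proof -
  have "M.expectation (\<lambda>\<omega>. \<Sum>i<G. r i \<omega>) = (\<Sum>i<G. M.expectation (r i))"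
    by (rule Bochner_Integration.integral_sum) (simp add: integrable_sample_value)
  then show ?thesis
    using sample_size_pos by (simp add: expectation_sample_value)
qed

lemma vimage_spread_le:
  "{\<omega> \<in> space M. spread_le \<sigma> G (\<lambda>i. r i \<omega>)}
    = (\<lambda>\<omega>. \<lambda>i\<in>{..<G}. r i \<omega>) -` {x \<in> space (sample G). spread_le \<sigma> G x} \<inter> space M"
  by (auto simp: spread_le_def space_PiM)

lemma sets_spread_le_sample: "{x \<in> space (sample G). spread_le \<sigma> G x} \<in> sets (PiM {..<G} (\<lambda>_. borel))"
  by (simp add: space_PiM) measurable

lemma sets_spread_le: "{\<omega> \<in> space M. spread_le \<sigma> G (\<lambda>i. r i \<omega>)} \<in> sets M"
  unfolding vimage_spread_le by (rule measurable_sets[OF measurable_restrict_sample sets_spread_le_sample])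

lemma measure_spread_le:
  "measure M {\<omega> \<in> space M. spread_le \<sigma> G (\<lambda>i. r i \<omega>)}
    = G * (LBINT u:{0..1}. f u * window_mass u ^ (G - 1))"
proof -
  have "measure M {\<omega> \<in> space M. spread_le \<sigma> G (\<lambda>i. r i \<omega>)}
      = measure (sample G) {x \<in> space (sample G). spread_le \<sigma> G x}"
    unfolding vimage_spread_le
    using measure_distr[OF measurable_restrict_sample sets_spread_le_sample]
    by (simp add: distr_restrict_sample)
  also have "\<dots> = G * (LBINT u:{0..1}. f u * window_mass u ^ (G - 1))"
    by (simp add: measure_sample_spread_le[OF sample_size_pos] integral_eq_set_integral)
  finally show ?thesis .
qed

lemma integral_mean_spread_le:
  "(\<integral>\<omega>. (\<Sum>i<G. r i \<omega>) / G * indicator {\<omega> \<in> space M. spread_le \<sigma> G (\<lambda>i. r i \<omega>)} \<omega> \<partial>M)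
    = (LBINT u:{0..1}. (u + real (G - 1) * (window_moment u / window_mass u)) * f u * window_mass u ^ (G - 1))"
proof -
  have [measurable]: "(\<lambda>x. x i) \<in> borel_measurable (PiM {..<G} (\<lambda>_. borel))" if "i < G" for i
    using that by simp
  have "(\<integral>\<omega>. (\<Sum>i<G. r i \<omega>) / G * indicator {\<omega> \<in> space M. spread_le \<sigma> G (\<lambda>i. r i \<omega>)} \<omega> \<partial>M)
      = (\<integral>x. (\<Sum>i<G. x i) * indicator {x. spread_le \<sigma> G x} x / G
          \<partial>distr M (PiM {..<G} (\<lambda>_. borel)) (\<lambda>\<omega>. \<lambda>i\<in>{..<G}. r i \<omega>))"
    by (subst integral_distr[OF measurable_restrict_sample])
      (auto intro!: Bochner_Integration.integral_cong simp: spread_le_def indicator_def)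
  also have "\<dots> = (\<integral>u. u * window_mass u ^ (G - 1)
        + real (G - 1) * (window_moment u * window_mass u ^ (G - 2)) \<partial>density lborel f)"
    using sample_size_pos by (simp add: distr_restrict_sample integral_sample_sum_spread_le)
  also have "\<dots> = (LBINT u:{0..1}. (u + real (G - 1) * (window_moment u / window_mass u))
      * f u * window_mass u ^ (G - 1))"
  proof -
    have "window_moment u * window_mass u ^ (G - 2)
        = window_moment u / window_mass u * window_mass u ^ (G - 1)" if "G \<noteq> 1" for u
    proof -
      have "Suc (G - 2) = G - 1"
        using that sample_size_pos by linarith
      then show ?thesis
        using window_moment_mult_power[of u "G - 2"] by metis
    qed
    then have "real (G - 1) * (window_moment u * window_mass u ^ (G - 2))
        = real (G - 1) * (window_moment u / window_mass u * window_mass u ^ (G - 1))" for u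
      by (cases "G = 1") auto
    then show ?thesis
      by (simp add: integral_eq_set_integral algebra_simps)
  qed
  finally show ?thesis .
qed

end

lemma (in prob_space) cond_exp_event_eq_compl:
  assumes "integrable M X" and "S \<in> events"
  shows "cond_exp_event M X S = (expectation X - (\<integral>\<omega>. X \<omega> * indicator (space M - S) \<omega> \<partial>M)) / prob S"
proof -
  have "(\<integral>\<omega>. X \<omega> * indicator S \<omega> \<partial>M) = (\<integral>\<omega>. X \<omega> - X \<omega> * indicator (space M - S) \<omega> \<partial>M)"
    using sets.sets_into_space[OF assms(2)]
    by (intro Bochner_Integration.integral_cong) (auto simp: indicator_def)
  also have "\<dots> = expectation X - (\<integral>\<omega>. X \<omega> * indicator (space M - S) \<omega> \<partial>M)"
    using assms by (intro Bochner_Integration.integral_diff integrable_real_mult_indicator) auto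
  finally show ?thesis
    unfolding cond_exp_event_def by simp
qed

lemma (in prob_space) cond_exp_event_const_diff:
  assumes "integrable M X" and "S \<in> events" and "prob S \<noteq> 0"
  shows "cond_exp_event M (\<lambda>\<omega>. c - X \<omega>) S = c - cond_exp_event M X S"
proof -
  have "(\<integral>\<omega>. (c - X \<omega>) * indicator S \<omega> \<partial>M)
      = (\<integral>\<omega>. c * indicator S \<omega> - X \<omega> * indicator S \<omega> \<partial>M)"
    by (simp add: left_diff_distrib)
  also have "\<dots> = c * prob S - (\<integral>\<omega>. X \<omega> * indicator S \<omega> \<partial>M)"
    using assms(1,2)
    by (subst Bochner_Integration.integral_diff)
      (auto intro: integrable_real_mult_indicator integrable_real_indicator simp: emeasure_eq_measure)
  finally have "(\<integral>\<omega>. (c - X \<omega>) * indicator S \<omega> \<partial>M) = c * prob S - (\<integral>\<omega>. X \<omega> * indicator S \<omega> \<partial>M)" .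
  then show ?thesis
    using assms(3) unfolding cond_exp_event_def by (simp add: diff_divide_distrib)
qed

theorem theorem4:
  fixes M :: "'a measure" and G :: nat and r :: "nat \<Rightarrow> 'a \<Rightarrow> real"
    and f :: "real \<Rightarrow> real" and \<sigma> :: real
  assumes "prob_space M"
    and "G \<ge> 2"
    and "prob_space.indep_vars M (\<lambda>_. borel) r {..<G}"
    and "\<And>x. 0 \<le> f x"
    and "\<And>i. i < G \<Longrightarrow> distributed M lborel (r i) (\<lambda>x. ennreal (f x))"
    and "\<And>i \<omega>. i < G \<Longrightarrow> \<omega> \<in> space M \<Longrightarrow> r i \<omega> \<in> {0..1}"
    and "0 \<le> \<sigma>" and "\<sigma> \<le> 1"
  defines "p \<equiv> (\<integral>\<omega>. r 0 \<omega> \<partial>M)"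
    and "phat \<equiv> (\<lambda>\<omega>. (\<Sum>i<G. r i \<omega>) / real G)"
    and "Ahat \<equiv> (\<lambda>i \<omega>. r i \<omega> - (\<Sum>k<G. r k \<omega>) / real G)"
    and "A \<equiv> (\<lambda>i \<omega>. r i \<omega> - (\<integral>\<omega>'. r 0 \<omega>' \<partial>M))"
    and "S \<equiv> {\<omega> \<in> space M. \<exists>i<G. \<exists>j<G. i \<noteq> j \<and> \<bar>r i \<omega> - r j \<omega>\<bar> > \<sigma>}"
    and "Sc \<equiv> {\<omega> \<in> space M. \<not> (\<exists>i<G. \<exists>j<G. i \<noteq> j \<and> \<bar>r i \<omega> - r j \<omega>\<bar> > \<sigma>)}"
    and "q \<equiv> (\<lambda>u. cdf (distr M borel (r 0)) (min 1 (u + \<sigma>)) - cdf (distr M borel (r 0)) u)"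
    and "m \<equiv> (\<lambda>u. (LBINT x:{u..min 1 (u + \<sigma>)}. x * f x) /
        (cdf (distr M borel (r 0)) (min 1 (u + \<sigma>)) - cdf (distr M borel (r 0)) u))"
  shows "measure M Sc = real G * (LBINT u:{0..1}. f u * q u ^ (G - 1))
    \<and> measure M S = 1 - measure M Sc
    \<and> (\<integral>\<omega>. phat \<omega> * indicator Sc \<omega> \<partial>M)
           = (LBINT u:{0..1}. (u + real (G - 1) * m u) * f u * q u ^ (G - 1))
    \<and> (measure M S > 0 \<longrightarrow>
           cond_exp_event M phat S = (p - (\<integral>\<omega>. phat \<omega> * indicator Sc \<omega> \<partial>M)) / measure M S
         \<and> (\<forall>i<G. cond_exp_event M (\<lambda>\<omega>. Ahat i \<omega> - A i \<omega>) S = p - cond_exp_event M phat S))"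
proof -
  interpret M: prob_space M by fact
  have G: "0 < G" using assms(2) by simp
  have law: "distr M borel (r i) = density lborel f" if "i < G" for i
    using distr_borel_eq_density[OF assms(5)[OF that]] .
  interpret density_sample_law f \<sigma>
    using M.density_sample_law_of_distributed[OF assms(5)[OF G] assms(4) assms(6)[OF G] assms(7)] .
  interpret iid_density_sample f \<sigma> M G r
    using G assms(3) law distributed_measurable[OF assms(5)] by unfold_locales simp_all
  have Sc_eq: "Sc = {\<omega> \<in> space M. spread_le \<sigma> G (\<lambda>i. r i \<omega>)}"
    unfolding Sc_def spread_le_iff_no_distant_pair[OF assms(7)] ..
  have S_eq: "S = space M - Sc"
    by (auto simp: S_def Sc_def)
  have qm: "q u = window_mass u" "m u = window_moment u / window_mass u" if "u \<in> {0..1}" for u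
    using that law[OF G] cdf_diff_eq_window_mass window_moment_eq_set_integral
    by (simp_all add: q_def m_def)
  have P_Sc: "measure M Sc = real G * (LBINT u:{0..1}. f u * q u ^ (G - 1))"
    unfolding Sc_eq measure_spread_le
    by (intro arg_cong2[where f = "(*)"] set_lebesgue_integral_cong) (auto simp: qm)
  have E_Sc: "(\<integral>\<omega>. phat \<omega> * indicator Sc \<omega> \<partial>M)
      = (LBINT u:{0..1}. (u + real (G - 1) * m u) * f u * q u ^ (G - 1))"
    unfolding Sc_eq phat_def integral_mean_spread_le by (intro set_lebesgue_integral_cong) (auto simp: qm)
  have phat_integrable: "integrable M phat"
    unfolding phat_def by (rule integrable_mean)
  have E_phat: "M.expectation phat = p"
    unfolding phat_def p_def expectation_mean expectation_sample_value[OF G] ..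
  have Sc_events: "Sc \<in> M.events"
    unfolding Sc_eq by (rule sets_spread_le)
  then have S_events: "S \<in> M.events" and Sc_compl: "space M - S = Sc"
    unfolding S_eq using sets.sets_into_space by auto
  have A_diff: "(\<lambda>\<omega>. Ahat i \<omega> - A i \<omega>) = (\<lambda>\<omega>. p - phat \<omega>)" for i
    by (simp add: Ahat_def A_def phat_def p_def fun_eq_iff)
  show ?thesis
    using P_Sc E_Sc M.cond_exp_event_eq_compl[OF phat_integrable S_events]
      M.cond_exp_event_const_diff[OF phat_integrable S_events]
    by (simp add: S_eq M.prob_compl[OF Sc_events] E_phat A_diff Sc_compl[unfolded S_eq])
qed

end
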